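(* Let $n,q$ be positive integers and let $f_{n,q}:\mathbb{C}^3\to\mathbb{C}$, $f_{n,q}(x,y,z)=x-3x^{2n+1}y^{2q}+2x^{3n+1}y^{3q}+yz$. Then the Łojasiewicz number at infinity of $f_{n,q}$ is $L_\infty(f_{n,q})=-\frac{n}{q}$.
   Context: For a polynomial $g:\mathbb{C}^m\to\mathbb{C}$, let $\operatorname{grad} g(x)=\left(\overline{\frac{\partial g}{\partial x_1}(x)},\dots,\overline{\frac{\partial g}{\partial x_m}(x)}\right)$. If $g$ has non-isolated singularities (critical points), set $L_\infty(g)=-\infty$. If $g$ has only isolated singularities (in particular, if it has no critical points), the Łojasiewicz number at infinity $L_\infty(g)$ is the supremum of the set of $\nu\in\mathbb{R}$ for which there exist $A>0$, $B>0$ such that for all $x\in\mathbb{C}^m$ with $\|x\|\ge B$ one has $A\|x\|^\nu\le\|\operatorname{grad} g(x)\|$. Equivalently, $L_\infty(g)=\lim_{r\to\infty}\frac{\log\varphi(r)}{\log r}$ where $\varphi(r)=\inf_{\|x\|=r}\|\operatorname{grad} g(x)\|$. *)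

theory Defs
  imports "HOL-Analysis.Analysis"
begin

definition partial_deriv :: "(complex^'m \<Rightarrow> complex) \<Rightarrow> 'm \<Rightarrow> complex^'m \<Rightarrow> complex" where
  "partial_deriv g i x = deriv (\<lambda>t. g (\<chi> j. if j = i then t else x $ j)) (x $ i)"

definition grad :: "(complex^'m \<Rightarrow> complex) \<Rightarrow> complex^'m \<Rightarrow> complex^'m" where
  "grad g x = (\<chi> i. cnj (partial_deriv g i x))"

definition critical_set :: "(complex^'m \<Rightarrow> complex) \<Rightarrow> (complex^'m) set" where
  "critical_set g = {x. grad g x = 0}"

definition has_nonisolated_singularities :: "(complex^'m \<Rightarrow> complex) \<Rightarrow> bool" where
  "has_nonisolated_singularities g = (\<exists>x \<in> critical_set g. x islimpt critical_set g)"

definition lojasiewicz_infty :: "(complex^'m \<Rightarrow> complex) \<Rightarrow> ereal" where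
  "lojasiewicz_infty g =
     (if has_nonisolated_singularities g then -\<infinity>
      else Sup {ereal \<nu> | \<nu>. \<exists>A>0. \<exists>B>0. \<forall>x. norm x \<ge> B \<longrightarrow>
                  A * norm x powr \<nu> \<le> norm (grad g x)})"

definition f_nq :: "nat \<Rightarrow> nat \<Rightarrow> complex^3 \<Rightarrow> complex" where
  "f_nq n q v = (let x = v $ 1; y = v $ 2; z = v $ 3 in
      x - 3 * x ^ (2*n+1) * y ^ (2*q) + 2 * x ^ (3*n+1) * y ^ (3*q) + y * z)"

end

theory Submission
  imports Defs
begin

(* Write u = x^n y^q. Then df/dx = 1 - 3(2n+1)u^2 + 2(3n+1)u^3, df/dy = 6q x^(2n+1) y^(2q-1) (u - 1) + z
   and df/dz = y, so f has no critical points. Where |u| <= r = 1/(6(n+1)), |df/dx| >= 1/2; elsewhere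
   |y|^q > r / |x|^n >= r / |v|^n, so |grad f(v)| >= |y| >= r^(1/q) |v|^(-n/q). Conversely, the
   cubic in u vanishes at u = 1, so along the curve (s, s^(-n/q), 0) both df/dx and df/dy vanish and
   |grad f| = s^(-n/q) while |v| is comparable to s: no exponent above -n/q is admissible. *)

lemma partial_deriv_eqI:
  "((\<lambda>t. g (\<chi> j. if j = i then t else x $ j)) has_field_derivative D) (at (x $ i))
    \<Longrightarrow> partial_deriv g i x = D"
  by (simp add: partial_deriv_def DERIV_imp_deriv)

lemma grad_nth [simp]: "grad g x $ i = cnj (partial_deriv g i x)"
  by (simp add: grad_def)

lemma norm_vec3:
  "norm (x :: 'a::real_normed_vector^3) = sqrt (norm (x$1)^2 + norm (x$2)^2 + norm (x$3)^2)"
  by (simp add: norm_vec_def L2_set_def sum_3)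

lemma has_field_derivative_monomial:
  "((\<lambda>t. c * t ^ k) has_field_derivative c * of_nat k * x ^ (k - 1)) (at x)"
  by (rule DERIV_cong[OF DERIV_cmult[OF DERIV_power[OF DERIV_ident]]]) simp

lemma lojasiewicz_infty_eqI:
  assumes "\<not> has_nonisolated_singularities g"
    and "\<exists>A>0. \<exists>B>0. \<forall>x. B \<le> norm x \<longrightarrow> A * norm x powr \<nu> \<le> norm (grad g x)"
    and "\<And>\<nu>' A B. A > 0 \<Longrightarrow> \<forall>x. B \<le> norm x \<longrightarrow> A * norm x powr \<nu>' \<le> norm (grad g x)
      \<Longrightarrow> \<nu>' \<le> \<nu>"
  shows "lojasiewicz_infty g = ereal \<nu>"
  unfolding lojasiewicz_infty_def if_not_P[OF assms(1)]
  by (rule Sup_eqI) (use assms(2,3) in auto)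

lemma exponent_le_of_test_points:
  fixes h :: "'a::real_normed_vector \<Rightarrow> real"
  assumes test: "\<And>s. 1 \<le> s \<Longrightarrow> \<exists>v. s \<le> norm v \<and> norm v \<le> c * s \<and> h v \<le> D * s powr \<mu>"
    and "A > 0" and bound: "\<forall>x. B \<le> norm x \<longrightarrow> A * norm x powr \<nu> \<le> h x"
  shows "\<nu> \<le> \<mu>"
proof (rule ccontr)
  assume "\<not> \<nu> \<le> \<mu>"
  then have e: "\<nu> - \<mu> > 0" by simp
  have "1 \<le> c"
    using test[of 1] by auto
  define k where "k = min 1 (c powr \<nu>)"
  have "k > 0"
    using \<open>1 \<le> c\<close> by (simp add: k_def)
  have along: "A * k * s powr (\<nu> - \<mu>) \<le> D" if large: "max 1 B \<le> s" for s
  proof -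
    obtain v where v: "s \<le> norm v" "norm v \<le> c * s" "h v \<le> D * s powr \<mu>"
      using test large by force
    have "k * s powr \<nu> \<le> norm v powr \<nu>"
    proof (cases "0 \<le> \<nu>")
      case True
      have "k * s powr \<nu> \<le> 1 * s powr \<nu>"
        by (intro mult_right_mono) (auto simp: k_def)
      also have "\<dots> \<le> norm v powr \<nu>"
        using True v large by (simp add: powr_mono2)
      finally show ?thesis .
    next
      case False
      have "k * s powr \<nu> \<le> c powr \<nu> * s powr \<nu>"
        by (intro mult_right_mono) (auto simp: k_def)
      also have "\<dots> = (c * s) powr \<nu>"
        using \<open>1 \<le> c\<close> large by (simp add: powr_mult)
      also have "\<dots> \<le> norm v powr \<nu>"
        using False v large by (intro powr_mono2') auto
      finally show ?thesis .
    qed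
    then have "A * k * s powr \<nu> \<le> A * norm v powr \<nu>"
      using \<open>A > 0\<close> by (simp add: mult.assoc)
    also have "\<dots> \<le> h v"
      using bound v(1) large by auto
    also have "\<dots> \<le> D * s powr \<mu>"
      by (rule v(3))
    finally have "(A * k * s powr (\<nu> - \<mu>)) * s powr \<mu> \<le> D * s powr \<mu>"
      using large by (simp add: powr_diff)
    then show ?thesis
      using large by simp
  qed
  have "0 < A * k * (max 1 B) powr (\<nu> - \<mu>)"
    using \<open>A > 0\<close> \<open>k > 0\<close> by simp
  with along[of "max 1 B"] have "D > 0"
    by simp
  define M where "M = 2 * D / (A * k)"
  define s where "s = max (max 1 B) (M powr (1 / (\<nu> - \<mu>)))"
  have "M = (M powr (1 / (\<nu> - \<mu>))) powr (\<nu> - \<mu>)"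
    using e \<open>D > 0\<close> \<open>A > 0\<close> \<open>k > 0\<close> by (simp add: M_def powr_powr)
  also have "\<dots> \<le> s powr (\<nu> - \<mu>)"
    using e by (intro powr_mono2) (auto simp: s_def)
  finally have "2 * D \<le> A * k * s powr (\<nu> - \<mu>)"
    using \<open>A > 0\<close> \<open>k > 0\<close> by (simp add: M_def field_simps)
  with along[of s] \<open>D > 0\<close> show False
    by (simp add: s_def)
qed

lemma powr_le_one_of_nonpos:
  fixes x a :: real
  assumes "1 \<le> x" "a \<le> 0"
  shows "x powr a \<le> 1"
  using powr_mono[OF assms(2,1)] assms(1) by simp

lemma factor_ge_of_monomial_gt:
  fixes a b r s :: real
  assumes "r < a^n * b^q" "0 < r" "0 \<le> a" "a \<le> s" "0 < s" "0 \<le> b" "q > 0"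
  shows "r powr (1 / real q) * s powr (- real n / real q) \<le> b"
proof -
  have "a^n * b^q \<le> s^n * b^q"
    using assms by (intro mult_right_mono power_mono) auto
  then have "r / s^n \<le> b^q"
    using assms(1,5) by (simp add: pos_divide_le_eq mult.commute)
  moreover have "r * s powr (- real n) = r / s^n"
    using assms(5) by (simp add: powr_minus powr_realpow divide_inverse)
  ultimately have "(r * s powr (- real n)) powr (1 / real q) \<le> (b^q) powr (1 / real q)"
    using assms(2,5) by (intro powr_mono2) auto
  also have "(b^q) powr (1 / real q) = b"
  proof (cases "b = 0")
    case False
    then have "b^q = b powr real q"
      using assms(6) by (simp add: powr_realpow)
    then show ?thesis
      using assms(6,7) by (simp add: powr_powr)
  qed (use assms(7) in simp)
  finally show ?thesis
    using assms(2,5) by (simp add: powr_mult powr_powr)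
qed

lemma partial_deriv_f_nq_1:
  fixes n q :: nat and v :: "complex^3"
  defines "u \<equiv> (v$1)^n * (v$2)^q"
  shows "partial_deriv (f_nq n q) 1 v = 1 - 3 * of_nat (2*n+1) * u^2 + 2 * of_nat (3*n+1) * u^3"
proof (rule partial_deriv_eqI)
  let ?x = "v$1" and ?y = "v$2" and ?z = "v$3"
  have "((\<lambda>t. t + (- 3 * ?y^(2*q)) * t^(2*n+1) + (2 * ?y^(3*q)) * t^(3*n+1) + ?y * ?z)
      has_field_derivative (1 + (- 3 * ?y^(2*q)) * of_nat (2*n+1) * ?x^(2*n+1-1)
        + (2 * ?y^(3*q)) * of_nat (3*n+1) * ?x^(3*n+1-1) + 0)) (at ?x)"
    by (intro DERIV_add DERIV_ident has_field_derivative_monomial DERIV_const)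
  then show "((\<lambda>t. f_nq n q (\<chi> j. if j = 1 then t else v $ j)) has_field_derivative
      1 - 3 * of_nat (2*n+1) * u^2 + 2 * of_nat (3*n+1) * u^3) (at ?x)"
    by (simp add: f_nq_def Let_def u_def power_mult_distrib power_mult[symmetric] algebra_simps)
qed

lemma partial_deriv_f_nq_2:
  fixes n q :: nat and v :: "complex^3"
  assumes "q > 0"
  defines "u \<equiv> (v$1)^n * (v$2)^q"
  shows "partial_deriv (f_nq n q) 2 v = 6 * of_nat q * (v$1)^(2*n+1) * (v$2)^(2*q-1) * (u - 1) + v$3"
proof -
  let ?x = "v$1" and ?y = "v$2" and ?z = "v$3"
  have f: "(\<lambda>t. f_nq n q (\<chi> j. if j = 2 then t else v $ j))
      = (\<lambda>t. ?x + (- 3 * ?x^(2*n+1)) * t^(2*q) + (2 * ?x^(3*n+1)) * t^(3*q) + t * ?z)"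
    by (simp add: fun_eq_iff f_nq_def Let_def algebra_simps)
  have d: "((\<lambda>t. ?x + (- 3 * ?x^(2*n+1)) * t^(2*q) + (2 * ?x^(3*n+1)) * t^(3*q) + t * ?z)
      has_field_derivative (0 + (- 3 * ?x^(2*n+1)) * of_nat (2*q) * ?y^(2*q-1)
        + (2 * ?x^(3*n+1)) * of_nat (3*q) * ?y^(3*q-1) + 1 * ?z)) (at ?y)"
    by (intro DERIV_add DERIV_cmult_right DERIV_ident has_field_derivative_monomial DERIV_const)
  have "0 + (- 3 * ?x^(2*n+1)) * of_nat (2*q) * ?y^(2*q-1)
        + (2 * ?x^(3*n+1)) * of_nat (3*q) * ?y^(3*q-1) + 1 * ?z
      = 6 * of_nat q * (?x^(3*n+1) * ?y^(3*q-1) - ?x^(2*n+1) * ?y^(2*q-1)) + ?z"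
    by (simp add: algebra_simps)
  also have "?x^(3*n+1) * ?y^(3*q-1) = ?x^(2*n+1) * ?y^(2*q-1) * u"
    using assms(1) by (simp add: u_def mult_ac flip: power_add)
  finally have "0 + (- 3 * ?x^(2*n+1)) * of_nat (2*q) * ?y^(2*q-1)
        + (2 * ?x^(3*n+1)) * of_nat (3*q) * ?y^(3*q-1) + 1 * ?z
      = 6 * of_nat q * ?x^(2*n+1) * ?y^(2*q-1) * (u - 1) + ?z"
    by (simp add: algebra_simps)
  from DERIV_cong[OF d this] show ?thesis
    unfolding f[symmetric] by (rule partial_deriv_eqI)
qed

lemma partial_deriv_f_nq_3: "partial_deriv (f_nq n q) 3 v = v$2"
  by (rule partial_deriv_eqI) (auto intro!: derivative_eq_intros simp: f_nq_def Let_def)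

lemma critical_set_f_nq:
  assumes "q > 0" shows "critical_set (f_nq n q) = {}"
proof -
  have "grad (f_nq n q) v \<noteq> 0" for v
  proof
    assume "grad (f_nq n q) v = 0"
    then have "partial_deriv (f_nq n q) 1 v = 0" "partial_deriv (f_nq n q) 3 v = 0"
      by (metis complex_cnj_zero_iff grad_nth zero_index)+
    then show False
      using assms by (simp add: partial_deriv_f_nq_1 partial_deriv_f_nq_3 zero_power)
  qed
  then show ?thesis by (simp add: critical_set_def)
qed

lemma half_le_norm_cubic:
  fixes u :: complex
  assumes "norm u \<le> 1 / (6 * (real n + 1))"
  shows "1/2 \<le> norm (1 - 3 * of_nat (2*n+1) * u^2 + 2 * of_nat (3*n+1) * u^3)"
proof -
  define r where "r = 1 / (6 * (real n + 1))"
  have "norm u \<le> r" "r \<le> 1" using assms by (simp_all add: r_def)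
  then have u2: "norm u ^ 2 \<le> r^2" and u3: "norm u ^ 3 \<le> r^2"
    using power_mono[of "norm u" r 2] power_decreasing[of 2 3 "norm u"] by auto
  have r12: "(12 * real n + 12) * r = 2"
    by (simp add: r_def field_simps)
  have "norm (3 * of_nat (2*n+1) * u^2) + norm (2 * of_nat (3*n+1) * u^3)
      = 3 * (2 * real n + 1) * norm u ^ 2 + 2 * (3 * real n + 1) * norm u ^ 3"
    by (simp only: norm_mult norm_power norm_numeral norm_of_nat) (simp add: algebra_simps)
  also have "\<dots> \<le> 3 * (2 * real n + 1) * r^2 + 2 * (3 * real n + 1) * r^2"
    using u2 u3 by (intro add_mono mult_left_mono) auto
  also have "\<dots> \<le> (12 * real n + 12) * r^2"
    by (simp add: algebra_simps)
  also have "\<dots> = 2 * r"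
    using r12 by (metis mult.assoc power2_eq_square)
  also have "\<dots> \<le> 1/2"
    by (simp add: r_def)
  finally have "norm (3 * of_nat (2*n+1) * u^2) + norm (2 * of_nat (3*n+1) * u^3) \<le> 1/2" .
  moreover have "1 - norm (3 * of_nat (2*n+1) * u^2) - norm (2 * of_nat (3*n+1) * u^3)
      \<le> norm (1 - 3 * of_nat (2*n+1) * u^2 + 2 * of_nat (3*n+1) * u^3)"
    using norm_triangle_ineq2[of 1 "3 * of_nat (2*n+1) * u^2"]
      norm_diff_ineq[of "1 - 3 * of_nat (2*n+1) * u^2" "2 * of_nat (3*n+1) * u^3"] by simp
  ultimately show ?thesis by linarith
qed

lemma grad_f_nq_lower_bound:
  fixes v :: "complex^3"
  assumes "q > 0" "1 \<le> norm v"
  shows "min (1/2) ((1 / (6 * (real n + 1))) powr (1 / real q)) * norm v powr (- real n / real q)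
    \<le> norm (grad (f_nq n q) v)"
proof -
  define r where "r = 1 / (6 * (real n + 1))"
  define u where "u = (v$1)^n * (v$2)^q"
  have decay: "norm v powr (- real n / real q) \<le> 1"
    using assms(2) by (simp add: powr_le_one_of_nonpos)
  have "norm (partial_deriv (f_nq n q) 1 v) \<le> norm (grad (f_nq n q) v)"
       "norm (v$2) \<le> norm (grad (f_nq n q) v)"
    using Finite_Cartesian_Product.norm_nth_le[of "grad (f_nq n q) v" 1]
      Finite_Cartesian_Product.norm_nth_le[of "grad (f_nq n q) v" 3]
    by (simp_all add: partial_deriv_f_nq_3)
  show ?thesis
  proof (cases "norm u \<le> r")
    case True
    then have "1/2 \<le> norm (partial_deriv (f_nq n q) 1 v)"
      unfolding partial_deriv_f_nq_1 u_def r_def by (rule half_le_norm_cubic)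
    moreover have "min (1/2) (r powr (1 / real q)) * norm v powr (- real n / real q) \<le> 1/2 * 1"
      using decay by (intro mult_mono) auto
    ultimately show ?thesis
      using \<open>norm (partial_deriv (f_nq n q) 1 v) \<le> _\<close> unfolding r_def by linarith
  next
    case False
    then have "r < norm (v$1) ^ n * norm (v$2) ^ q"
      by (simp add: u_def norm_mult norm_power)
    then have "r powr (1 / real q) * norm v powr (- real n / real q) \<le> norm (v$2)"
      using assms by (intro factor_ge_of_monomial_gt[where a = "norm (v$1)"])
        (auto simp: r_def Finite_Cartesian_Product.norm_nth_le)
    moreover have "min (1/2) (r powr (1 / real q)) * norm v powr (- real n / real q)
        \<le> r powr (1 / real q) * norm v powr (- real n / real q)"
      by (intro mult_right_mono) auto
    ultimately show ?thesis
      using \<open>norm (v$2) \<le> _\<close> unfolding r_def by linarith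
  qed
qed

lemma grad_f_nq_test_point:
  fixes n q :: nat and s :: real
  assumes "q > 0" "1 \<le> s"
  defines "t \<equiv> s powr (- real n / real q)"
  defines "v \<equiv> (\<chi> j. if j = 1 then of_real s else if j = 2 then of_real t else 0) :: complex^3"
  shows "s \<le> norm v" "norm v \<le> 2 * s" "norm (grad (f_nq n q) v) = t"
proof -
  have "0 < t" "t \<le> 1"
    using assms(2) by (simp_all add: t_def powr_le_one_of_nonpos)
  then have t: "0 < t" "t \<le> s"
    using assms(2) by simp_all
  have "t^q = t powr real q"
    using t by (simp add: powr_realpow)
  also have "\<dots> = s powr (- real n)"
    using assms(1) by (simp add: t_def powr_powr)
  also have "\<dots> = inverse (s^n)"
    using assms(2) by (simp add: powr_minus powr_realpow)
  finally have "s^n * t^q = 1"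
    using assms(2) by simp
  moreover have v: "v$1 = of_real s" "v$2 = of_real t" "v$3 = 0"
    by (simp_all add: v_def)
  ultimately have u: "(v$1)^n * (v$2)^q = 1"
    by (simp flip: of_real_power of_real_mult)
  have "partial_deriv (f_nq n q) 1 v = 0" "partial_deriv (f_nq n q) 2 v = 0"
    using assms(1) by (simp_all add: partial_deriv_f_nq_1 partial_deriv_f_nq_2 u v(3))
  then show "norm (grad (f_nq n q) v) = t"
    using t by (simp add: norm_vec3 partial_deriv_f_nq_3 v)
  have norm_v: "norm v = sqrt (s^2 + t^2)"
    by (simp add: norm_vec3 v)
  then show "s \<le> norm v"
    by (simp add: real_le_rsqrt)
  have "t^2 \<le> s^2"
    using t by (intro power_mono) auto
  then have bound: "s^2 + t^2 \<le> (2 * s)^2"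
    by (simp add: power_mult_distrib) (use zero_le_power2[of s] in linarith)
  show "norm v \<le> 2 * s"
    unfolding norm_v using assms(2) bound by (intro real_le_lsqrt) auto
qed

theorem proposition1p4:
  fixes n q :: nat
  assumes "n > 0" and "q > 0"
  shows "lojasiewicz_infty (f_nq n q) = ereal (- real n / real q)"
proof (rule lojasiewicz_infty_eqI)
  show "\<not> has_nonisolated_singularities (f_nq n q)"
    using critical_set_f_nq[OF \<open>q > 0\<close>] by (simp add: has_nonisolated_singularities_def)
  show "\<exists>A>0. \<exists>B>0. \<forall>v. B \<le> norm v \<longrightarrow>
      A * norm v powr (- real n / real q) \<le> norm (grad (f_nq n q) v)"
    using grad_f_nq_lower_bound[OF \<open>q > 0\<close>] by (intro exI conjI) auto
  fix \<nu> A B :: real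
  assume "A > 0" and bound: "\<forall>v. B \<le> norm v \<longrightarrow> A * norm v powr \<nu> \<le> norm (grad (f_nq n q) v)"
  have test_points: "\<exists>v. s \<le> norm v \<and> norm v \<le> 2 * s \<and>
      norm (grad (f_nq n q) v) \<le> 1 * s powr (- real n / real q)" if "1 \<le> s" for s
    using grad_f_nq_test_point[where n = n, OF \<open>q > 0\<close> that] by auto
  show "\<nu> \<le> - real n / real q"
    using exponent_le_of_test_points[OF test_points \<open>A > 0\<close> bound] .
qed

end
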